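(* For every finite item sequence $I=(a_1,\dots,a_n)\in(0,1]^n$, the algorithm $MM$ satisfies $MM(I)\le \frac{3}{2}\cdot OPT(I)+1$.
   Context: Classic bin packing: an item sequence $I=(a_1,\dots,a_n)\in(0,1]^n$ (item $i$ has size $a_i$) must be packed into bins of capacity $1$, i.e. one seeks an assignment $f:\{1,\dots,n\}\to\mathbb{N}$ with $\sum_{i:f(i)=j}a_i\le 1$ for every bin $j$; the cost is the number of non-empty bins. $OPT(I)$ is the minimum possible number of non-empty bins, and $ALG(I)$ denotes the number of non-empty bins in the assignment output by an algorithm $ALG$. Algorithm $MM$: sort $I$ in non-increasing order of size; keep a single open bin with current load $S$ (initially a new empty bin). Repeat while items remain: if the largest remaining item (head) fits, i.e. $S+\text{head}\le1$, pack it into the open bin; otherwise, if the smallest remaining item (tail) fits, pack it into the open bin; otherwise close the open bin permanently and open a new empty bin. *)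

theory Defs
  imports Complex_Main
begin

text \<open>Bin packing. An item sequence is a list I of reals; item i (0-based, i < length I)
  has size I ! i. A packing is an assignment f :: nat => nat of items to bins.\<close>

definition valid_packing :: "real list \<Rightarrow> (nat \<Rightarrow> nat) \<Rightarrow> bool" where
  "valid_packing I f \<longleftrightarrow>
     (\<forall>j. (\<Sum>i\<in>{i. i < length I \<and> f i = j}. I ! i) \<le> 1)"

definition num_bins :: "real list \<Rightarrow> (nat \<Rightarrow> nat) \<Rightarrow> nat" where
  "num_bins I f = card (f ` {..<length I})"

definition OPT :: "real list \<Rightarrow> nat" where
  "OPT I = (LEAST k. \<exists>f. valid_packing I f \<and> num_bins I f = k)"

text \<open>Algorithm MM on the remaining items xs (sorted non-increasingly) with current
  open bin B (list of its items). The last branch (empty open bin and the head does not fit)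
  is unreachable for items of size at most 1; it is only there to make the function total.\<close>
function mm_pack :: "real list \<Rightarrow> real list \<Rightarrow> real list list" where
  "mm_pack [] B = [B]"
| "mm_pack (x # xs) B =
     (if sum_list B + x \<le> 1 then mm_pack xs (B @ [x])
      else if sum_list B + last (x # xs) \<le> 1
        then mm_pack (butlast (x # xs)) (B @ [last (x # xs)])
      else if B \<noteq> [] then B # mm_pack (x # xs) []
      else [x # xs])"
  by pat_completeness auto
termination
  by (relation "measure (\<lambda>(xs, B). 2 * length xs + (if B = [] then 0 else 1))") auto

definition MM :: "real list \<Rightarrow> nat" where
  "MM I = length (filter (\<lambda>b. b \<noteq> []) (mm_pack (rev (sort I)) []))"

end

theory Submission
  imports Defs "HOL-Library.Multiset"
begin

(* MM closes a bin only when no remaining item fits into it, and it packs the items in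
   non-increasing order. If the largest item is at most 1/2, every bin but the last receives
   the two largest remaining items x1 >= x2 and is closed by some y <= x2, so it is more than
   2/3 full and MM <= 3/2 * sum I + 1. A bin opened by an item above 1/2 carries weight 2 in
   w = #{x > 1/2} + #{x > 1/3}; if some later item is at most 1/3 it is also more than 2/3 full,
   otherwise all later items exceed 1/3 and every later bin holds an item above 1/2 or two
   items above 1/3, so every bin but the last has weight at least 2. Hence MM <= 3/2 * sum I + 1
   or 2 * MM <= w + 1, and both bounds give the claim because OPT >= sum I,
   OPT >= #{x > 1/2} and 2 * OPT >= #{x > 1/3}. *)

(* Left to simp, this equation unfolds forever: both butlast (x # xs) and the call
   mm_pack (x # xs) [] in the closing branch are again of the form mm_pack (_ # _) _. *)
declare mm_pack.simps(2) [simp del]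

definition mm_bins :: "real list \<Rightarrow> nat" where
  "mm_bins xs = length (filter (\<lambda>b. b \<noteq> []) (mm_pack xs []))"

definition count_above :: "real \<Rightarrow> real list \<Rightarrow> nat" where
  "count_above t xs = length (filter ((<) t) xs)"

lemma mm_bins_Nil [simp]: "mm_bins [] = 0"
  by (simp add: mm_bins_def)

lemma sum_list_mset_add:
  "mset as + mset bs = mset cs \<Longrightarrow> sum_list as + sum_list bs = (sum_list cs :: real)"
  by (metis sum_mset_sum_list sum_mset.union)

lemma count_above_conv_mset: "count_above t xs = size (filter_mset ((<) t) (mset xs))"
  unfolding count_above_def by (metis mset_filter size_mset)

lemma count_above_mset_add:
  "mset as + mset bs = mset cs \<Longrightarrow> count_above t as + count_above t bs = count_above t cs"
  unfolding count_above_conv_mset by (metis size_union filter_union_mset)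

lemma set_mset_add:
  "mset as + mset bs = mset cs \<Longrightarrow> set as \<union> set bs = set cs"
  by (metis set_mset_mset set_mset_union)

lemma count_above_pos: "x \<in> set xs \<Longrightarrow> t < x \<Longrightarrow> 0 < count_above t xs"
  unfolding count_above_def by (metis filter_empty_conv length_greater_0_conv)

lemma count_above_eq_length: "\<forall>x\<in>set xs. t < x \<Longrightarrow> count_above t xs = length xs"
  unfolding count_above_def by simp

lemma sorted_wrt_ge_last_le: "sorted_wrt (\<ge>) (xs :: real list) \<Longrightarrow> y \<in> set xs \<Longrightarrow> last xs \<le> y"
  by (induction xs) (auto simp: last_ConsR)

lemma sorted_wrt_ge_le_hd: "sorted_wrt (\<ge>) (xs :: real list) \<Longrightarrow> y \<in> set xs \<Longrightarrow> y \<le> hd xs"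
  by (cases xs) auto

lemma sum_list_le_num_bins:
  assumes "valid_packing I f"
  shows "sum_list I \<le> real (num_bins I f)"
proof -
  let ?S = "{..<length I}"
  have "sum_list I = (\<Sum>i\<in>?S. I ! i)"
    by (simp add: sum_list_sum_nth atLeast0LessThan)
  also have "\<dots> = (\<Sum>j\<in>f ` ?S. \<Sum>i\<in>{i\<in>?S. f i = j}. I ! i)"
    by (rule sum.group[symmetric]) auto
  also have "\<dots> \<le> (\<Sum>j\<in>f ` ?S. 1)"
    using assms unfolding valid_packing_def by (intro sum_mono) simp
  also have "\<dots> = real (num_bins I f)"
    by (simp add: num_bins_def)
  finally show ?thesis .
qed

lemma count_above_le_num_bins:
  assumes "valid_packing I f" and "\<forall>x\<in>set I. 0 \<le> x"
    and "0 < t" and "1 \<le> real (k + 1) * t"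
  shows "count_above t I \<le> k * num_bins I f"
proof -
  let ?S = "{..<length I}" and ?P = "{i. i < length I \<and> t < I ! i}"
  have "count_above t I = (\<Sum>i\<in>?P. 1)"
    by (simp add: count_above_def length_filter_conv_card)
  also have "\<dots> = (\<Sum>j\<in>f ` ?S. \<Sum>i\<in>{i\<in>?P. f i = j}. 1)"
    by (rule sum.group[symmetric]) auto
  also have "\<dots> \<le> (\<Sum>j\<in>f ` ?S. k)"
  proof (rule sum_mono)
    fix j
    let ?Q = "{i\<in>?P. f i = j}"
    show "(\<Sum>i\<in>?Q. 1) \<le> k"
    proof (cases "?Q = {}")
      case True
      then show ?thesis by (simp only: sum.empty le0)
    next
      case False
      have "real (card ?Q) * t = (\<Sum>i\<in>?Q. t)"
        by simp
      also have "\<dots> < (\<Sum>i\<in>?Q. I ! i)"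
        using False by (intro sum_strict_mono) auto
      also have "\<dots> \<le> (\<Sum>i\<in>{i. i < length I \<and> f i = j}. I ! i)"
        using assms(2) by (intro sum_mono2) auto
      also have "\<dots> \<le> real (k + 1) * t"
        using assms(1,4) unfolding valid_packing_def by (meson order_trans)
      finally show ?thesis
        using \<open>0 < t\<close> by simp
    qed
  qed
  also have "\<dots> = k * num_bins I f"
    by (simp add: num_bins_def)
  finally show ?thesis .
qed

lemma OPT_attained:
  assumes "\<forall>x\<in>set I. x \<le> 1"
  obtains f where "valid_packing I f" and "num_bins I f = OPT I"
proof -
  have "valid_packing I id"
    unfolding valid_packing_def
  proof
    fix j
    have "{i. i < length I \<and> id i = j} = (if j < length I then {j} else {})"
      by auto
    then show "(\<Sum>i\<in>{i. i < length I \<and> id i = j}. I ! i) \<le> 1"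
      using assms by simp
  qed
  then have "\<exists>k f. valid_packing I f \<and> num_bins I f = k"
    by blast
  then have "\<exists>f. valid_packing I f \<and> num_bins I f = OPT I"
    unfolding OPT_def by (rule LeastI_ex)
  with that show ?thesis
    by blast
qed

lemma sum_list_le_OPT:
  assumes "\<forall>x\<in>set I. x \<le> 1"
  shows "sum_list I \<le> real (OPT I)"
  using OPT_attained[OF assms] sum_list_le_num_bins by metis

lemma count_above_le_OPT:
  assumes "\<forall>x\<in>set I. 0 \<le> x \<and> x \<le> 1" and "0 < t" and "1 \<le> real (k + 1) * t"
  shows "count_above t I \<le> k * OPT I"
proof -
  obtain f where "valid_packing I f" and "num_bins I f = OPT I"
    using assms(1) OPT_attained by blast
  with assms show ?thesis
    using count_above_le_num_bins by fastforce
qed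

lemma mm_pack_split:
  assumes "sorted_wrt (\<ge>) xs" and "B \<noteq> []"
  shows "\<exists>C ys. length (filter (\<lambda>b. b \<noteq> []) (mm_pack xs B)) = Suc (mm_bins ys) \<and>
    mset C + mset ys = mset xs \<and> sorted_wrt (\<ge>) ys \<and> (\<forall>y\<in>set ys. 1 < sum_list (B @ C) + y)"
  using assms
proof (induction xs B rule: mm_pack.induct)
  case (1 B)
  then show ?case by (intro exI[of _ "[]"]) (simp add: mm_bins_def)
next
  case (2 x xs B)
  consider (head) "sum_list B + x \<le> 1"
    | (tail) "\<not> sum_list B + x \<le> 1" "sum_list B + last (x # xs) \<le> 1"
    | (close) "\<not> sum_list B + x \<le> 1" "\<not> sum_list B + last (x # xs) \<le> 1"
    by blast
  then show ?case
  proof cases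
    case head
    with "2.IH"(1) "2.prems" obtain C ys
      where "length (filter (\<lambda>b. b \<noteq> []) (mm_pack xs (B @ [x]))) = Suc (mm_bins ys)"
        and "mset C + mset ys = mset xs" and "sorted_wrt (\<ge>) ys"
        and "\<forall>y\<in>set ys. 1 < sum_list (B @ [x] @ C) + y"
      by auto
    moreover have "mm_pack (x # xs) B = mm_pack xs (B @ [x])"
      using head by (subst mm_pack.simps(2)) simp
    ultimately show ?thesis by (intro exI[of _ "x # C"] exI[of _ ys]) auto
  next
    case tail
    let ?l = "last (x # xs)"
    have "sorted_wrt (\<ge>) (butlast (x # xs))"
      using "2.prems"(1) by (simp only: butlast_conv_take sorted_wrt_take)
    with tail "2.IH"(2) obtain C ys
      where "length (filter (\<lambda>b. b \<noteq> []) (mm_pack (butlast (x # xs)) (B @ [?l]))) = Suc (mm_bins ys)"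
        and "mset C + mset ys = mset (butlast (x # xs))" and "sorted_wrt (\<ge>) ys"
        and "\<forall>y\<in>set ys. 1 < sum_list (B @ [?l] @ C) + y"
      by auto
    moreover have "mm_pack (x # xs) B = mm_pack (butlast (x # xs)) (B @ [?l])"
      using tail by (subst mm_pack.simps(2)) simp
    moreover have "mset (butlast (x # xs)) + {#?l#} = mset (x # xs)"
      by (metis append_butlast_last_id list.distinct(1) mset_append mset_single_iff_right)
    ultimately show ?thesis
      by (intro exI[of _ "?l # C"] exI[of _ ys]) (auto simp: add_ac)
  next
    case close
    then have "\<forall>y\<in>set (x # xs). 1 < sum_list B + y"
      using sorted_wrt_ge_last_le[OF "2.prems"(1)] by force
    moreover have "mm_pack (x # xs) B = B # mm_pack (x # xs) []"
      using close "2.prems"(2) by (subst mm_pack.simps(2)[of x xs B]) simp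
    ultimately show ?thesis
      using "2.prems" by (intro exI[of _ "[]"] exI[of _ "x # xs"]) (simp add: mm_bins_def)
  qed
qed

lemma mm_bins_first_bin:
  assumes sorted: "sorted_wrt (\<ge>) xs" and items: "\<forall>x\<in>set xs. 0 < x \<and> x \<le> 1"
    and "xs \<noteq> []"
  obtains B1 ys where "hd xs \<in> set B1" and "mset B1 + mset ys = mset xs"
    and "mm_bins xs = Suc (mm_bins ys)" and "sorted_wrt (\<ge>) ys"
    and "\<forall>y\<in>set ys. 1 < sum_list B1 + y"
    and "hd xs \<le> 1/2 \<Longrightarrow> ys \<noteq> [] \<Longrightarrow> 2 \<le> length B1 \<and> 2/3 < sum_list B1"
proof -
  obtain x1 r where xs: "xs = x1 # r"
    using \<open>xs \<noteq> []\<close> by (cases xs) auto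
  have "sorted_wrt (\<ge>) r"
    using sorted xs by simp
  show ?thesis
  proof (cases "1/2 < x1 \<or> r = []")
    case True
    have "mm_pack xs [] = mm_pack r [x1]"
      using items xs by (simp add: mm_pack.simps(2))
    moreover obtain C ys
      where "length (filter (\<lambda>b. b \<noteq> []) (mm_pack r [x1])) = Suc (mm_bins ys)"
        and "mset C + mset ys = mset r" and "sorted_wrt (\<ge>) ys"
        and "\<forall>y\<in>set ys. 1 < sum_list ([x1] @ C) + y"
      using mm_pack_split[OF \<open>sorted_wrt (\<ge>) r\<close>, of "[x1]"] by blast
    ultimately show ?thesis
      using True xs by (intro that[of "x1 # C" ys]) (auto simp: mm_bins_def)
  next
    case False
    then obtain x2 r' where r: "r = x2 # r'" and "x1 \<le> 1/2"
      by (cases r) auto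
    have "x2 \<le> x1"
      using sorted xs r by auto
    have "mm_pack xs [] = mm_pack r' [x1, x2]"
      using \<open>x1 \<le> 1/2\<close> \<open>x2 \<le> x1\<close> xs r
      by (simp add: mm_pack.simps(2)[of x1 "x2 # r'" "[]"] mm_pack.simps(2)[of x2 r' "[x1]"])
    moreover obtain C ys
      where "length (filter (\<lambda>b. b \<noteq> []) (mm_pack r' [x1, x2])) = Suc (mm_bins ys)"
        and split: "mset C + mset ys = mset r'" and "sorted_wrt (\<ge>) ys"
        and no_fit: "\<forall>y\<in>set ys. 1 < sum_list ([x1, x2] @ C) + y"
      using mm_pack_split[of r' "[x1, x2]"] \<open>sorted_wrt (\<ge>) r\<close> r by auto
    moreover have "2/3 < sum_list (x1 # x2 # C)" if "ys \<noteq> []"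
      \<comment> \<open>a leftover y satisfies y \<le> x2 \<le> x1, so the bin content S has S + y > 1 and y \<le> S / 2\<close>
    proof -
      obtain y where y: "y \<in> set ys"
        using \<open>ys \<noteq> []\<close> by fastforce
      have "set C \<subseteq> set r'" and "y \<in> set r'"
        using split y set_mset_add by blast+
      then have "0 \<le> sum_list C" and "y \<le> x2"
        using items sorted xs r by (fastforce intro: sum_list_nonneg)+
      then show ?thesis
        using no_fit y \<open>x2 \<le> x1\<close> by fastforce
    qed
    ultimately show ?thesis
      using xs r by (intro that[of "x1 # x2 # C" ys]) (auto simp: mm_bins_def)
  qed
qed

lemma mm_bins_induct [consumes 2, case_names Nil first_bin]:
  assumes "sorted_wrt (\<ge>) xs" and "\<forall>x\<in>set xs. 0 < x \<and> x \<le> 1"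
    and Nil: "P []"
    and first_bin: "\<And>xs B1 ys. sorted_wrt (\<ge>) xs \<Longrightarrow> \<forall>x\<in>set xs. 0 < x \<and> x \<le> 1 \<Longrightarrow>
      xs \<noteq> [] \<Longrightarrow> hd xs \<in> set B1 \<Longrightarrow> mset B1 + mset ys = mset xs \<Longrightarrow>
      mm_bins xs = Suc (mm_bins ys) \<Longrightarrow> sorted_wrt (\<ge>) ys \<Longrightarrow>
      \<forall>y\<in>set ys. 1 < sum_list B1 + y \<Longrightarrow>
      (hd xs \<le> 1/2 \<Longrightarrow> ys \<noteq> [] \<Longrightarrow> 2 \<le> length B1 \<and> 2/3 < sum_list B1) \<Longrightarrow>
      P ys \<Longrightarrow> P xs"
  shows "P xs"
  using assms(1,2)
proof (induction "length xs" arbitrary: xs rule: less_induct)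
  case less
  show ?case
  proof (cases "xs = []")
    case True
    with Nil show ?thesis by simp
  next
    case False
    with less.prems obtain B1 ys where "hd xs \<in> set B1" and split: "mset B1 + mset ys = mset xs"
      and "mm_bins xs = Suc (mm_bins ys)" and "sorted_wrt (\<ge>) ys"
      and "\<forall>y\<in>set ys. 1 < sum_list B1 + y"
      and "hd xs \<le> 1/2 \<Longrightarrow> ys \<noteq> [] \<Longrightarrow> 2 \<le> length B1 \<and> 2/3 < sum_list B1"
      by (rule mm_bins_first_bin) blast
    moreover have "length ys < length xs"
      using split \<open>hd xs \<in> set B1\<close> by (metis length_pos_if_in_set less_add_same_cancel2 size_mset size_union)
    moreover have "\<forall>y\<in>set ys. 0 < y \<and> y \<le> 1"
      using split less.prems(2) set_mset_add by blast
    ultimately show ?thesis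
      using first_bin less False by blast
  qed
qed

lemma mm_bins_le_sum_if_small:
  assumes "sorted_wrt (\<ge>) xs" and "\<forall>x\<in>set xs. 0 < x \<and> x \<le> 1" and "\<forall>x\<in>set xs. x \<le> 1/2"
  shows "real (mm_bins xs) \<le> 3/2 * sum_list xs + 1"
  using assms
proof (induction xs rule: mm_bins_induct)
  case Nil
  then show ?case by simp
next
  case (first_bin xs B1 ys)
  have sum: "sum_list B1 + sum_list ys = sum_list xs"
    using first_bin sum_list_mset_add by blast
  show ?case
  proof (cases "ys = []")
    case True
    have "0 \<le> sum_list xs"
      using first_bin by (fastforce intro: sum_list_nonneg)
    with True first_bin show ?thesis by (simp add: mm_bins_def)
  next
    case False
    have "2/3 < sum_list B1"
      using first_bin False by simp
    moreover have "real (mm_bins ys) \<le> 3/2 * sum_list ys + 1"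
      using first_bin set_mset_add by blast
    ultimately show ?thesis
      using first_bin sum by simp
  qed
qed

lemma mm_bins_le_count_if_large:
  assumes "sorted_wrt (\<ge>) xs" and "\<forall>x\<in>set xs. 0 < x \<and> x \<le> 1" and "\<forall>x\<in>set xs. 1/3 < x"
  shows "2 * mm_bins xs \<le> count_above (1/2) xs + count_above (1/3) xs + 1"
  using assms
proof (induction xs rule: mm_bins_induct)
  case Nil
  then show ?case by simp
next
  case (first_bin xs B1 ys)
  have counts: "count_above t B1 + count_above t ys = count_above t xs" for t
    using first_bin count_above_mset_add by blast
  have B1_large: "\<forall>x\<in>set B1. 1/3 < x"
    using first_bin set_mset_add by blast
  then have "0 < count_above (1/3) B1"
    using first_bin count_above_pos by blast
  moreover have "2 \<le> count_above (1/2) B1 + count_above (1/3) B1" if "ys \<noteq> []"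
  proof (cases "1/2 < hd xs")
    case True
    then have "0 < count_above (1/2) B1"
      using first_bin count_above_pos by blast
    with \<open>0 < count_above (1/3) B1\<close> show ?thesis
      by linarith
  next
    case False
    then show ?thesis
      using first_bin that B1_large count_above_eq_length by simp
  qed
  moreover have "2 * mm_bins ys \<le> count_above (1/2) ys + count_above (1/3) ys + 1"
    using first_bin set_mset_add by blast
  ultimately show ?case
    using first_bin counts[of "1/2"] counts[of "1/3"] by (cases "ys = []") auto
qed

lemma mm_bins_le_sum_or_count:
  assumes "sorted_wrt (\<ge>) xs" and "\<forall>x\<in>set xs. 0 < x \<and> x \<le> 1"
  shows "real (mm_bins xs) \<le> 3/2 * sum_list xs + 1 \<or>
    2 * mm_bins xs \<le> count_above (1/2) xs + count_above (1/3) xs + 1"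
  using assms
proof (induction xs rule: mm_bins_induct)
  case Nil
  then show ?case by simp
next
  case (first_bin xs B1 ys)
  show ?case
  proof (cases "hd xs \<le> 1/2")
    case True
    then have "\<forall>x\<in>set xs. x \<le> 1/2"
      using first_bin sorted_wrt_ge_le_hd by fastforce
    then show ?thesis
      using first_bin mm_bins_le_sum_if_small by blast
  next
    case False
    have counts: "count_above t B1 + count_above t ys = count_above t xs" for t
      using first_bin count_above_mset_add by blast
    have "0 < count_above (1/2) B1" and "0 < count_above (1/3) B1"
      using first_bin False count_above_pos[of "hd xs" B1] by auto
    then have "2 \<le> count_above (1/2) B1 + count_above (1/3) B1"
      by linarith
    have ys_items: "\<forall>y\<in>set ys. 0 < y \<and> y \<le> 1"
      using first_bin set_mset_add by blast
    show ?thesis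
    proof (cases "\<forall>y\<in>set ys. 1/3 < y")
      case True
      then show ?thesis
        using mm_bins_le_count_if_large[of ys] ys_items first_bin counts[of "1/2"] counts[of "1/3"]
          \<open>2 \<le> count_above (1/2) B1 + count_above (1/3) B1\<close> by simp
    next
      case False
      then obtain y where "y \<in> set ys" and "y \<le> 1/3"
        by auto
      then have "2/3 < sum_list B1"
        using first_bin by fastforce
      moreover have "sum_list B1 + sum_list ys = sum_list xs"
        using first_bin sum_list_mset_add by blast
      ultimately show ?thesis
        using first_bin ys_items counts[of "1/2"] counts[of "1/3"]
          \<open>2 \<le> count_above (1/2) B1 + count_above (1/3) B1\<close> by auto
    qed
  qed
qed

theorem theorem1:
  fixes I :: "real list"
  assumes "\<forall>x\<in>set I. 0 < x \<and> x \<le> 1"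
  shows "real (MM I) \<le> 3 / 2 * real (OPT I) + 1"
proof -
  define xs where "xs = rev (sort I)"
  have "MM I = mm_bins xs" and "sorted_wrt (\<ge>) xs" and "mset xs = mset I"
    by (simp_all add: xs_def MM_def mm_bins_def sorted_wrt_rev)
  then have "sum_list xs = sum_list I" and "count_above t xs = count_above t I" for t
    by (metis sum_mset_sum_list, simp add: count_above_conv_mset)
  have "\<forall>x\<in>set xs. 0 < x \<and> x \<le> 1"
    using assms \<open>mset xs = mset I\<close> by (metis set_mset_mset)
  with \<open>sorted_wrt (\<ge>) xs\<close> have MM_bound: "real (mm_bins xs) \<le> 3/2 * sum_list xs + 1 \<or>
      2 * mm_bins xs \<le> count_above (1/2) xs + count_above (1/3) xs + 1"
    by (rule mm_bins_le_sum_or_count)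
  have items: "\<forall>x\<in>set I. 0 \<le> x \<and> x \<le> 1"
    using assms by auto
  then have "sum_list I \<le> OPT I" and "count_above (1/2) I \<le> OPT I"
    and "count_above (1/3) I \<le> 2 * OPT I"
    using sum_list_le_OPT count_above_le_OPT[OF items, of "1/2" 1]
      count_above_le_OPT[OF items, of "1/3" 2] by auto
  with MM_bound show ?thesis
    using \<open>MM I = mm_bins xs\<close> \<open>sum_list xs = sum_list I\<close> \<open>\<And>t. count_above t xs = count_above t I\<close>
    by auto
qed

end
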